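(* Under the good event $E$, the optimal policy $\pi^*$ satisfies $$\sum_{i\in[k]}P_{(\pi^*(0),i)}\mathbb{E}[R_i\mid\pi^*(i)]\le\sum_{i\in[k]}\widehat P_{(\pi^*(0),i)}\widehat{\mathcal{R}}_{(\pi^*(i),i)}+O\left(\sqrt{\max\left\{\widehat\lambda,\frac{m_0}{p_+}\right\}\frac{\log(NT)}{T}}\right),$$ where $\widehat\lambda=\|\widehat P\widehat M^{1/2}(\widehat P^\top\widehat f^* )^{\circ-1/2}\|_\infty^2$.
   Context: Two-stage causal MDP. Start state $0$, intermediate states $[k]$, terminal state. At each state $i\in\{0,\dots,k\}$: independent Bernoulli variables $X^i_1,\dots,X^i_n$, $q^i_j=\mathbb{P}\{X^i_j=1\}$ unknown; atomic interventions $\mathcal{I}_i=\{do()\}\cup\{do(X^i_j=0),do(X^i_j=1):j\in[n]\}$, $N=2n+1$ ($do(X^i_j=x)$ sets $X^i_j=x$, other variables drawn independently). Performing $a\in\mathcal{I}_0$ at state $0$ leads to $i\in[k]$ with unknown probability $P_{(a,i)}$ (depending stochastically on the realized $X^0$-values); $P\in\mathbb{R}^{N\times k}$, $p_+=\min\{P_{(a,i)}>0\}$. At state $i\in[k]$, after an intervention all $X^i_j$ and a reward $R_i\in\{0,1\}$ (law depending on the $X^i$-values) are observed; $\mathbb{E}[R_i\mid a]$ is the expected reward under $a\in\mathcal{I}_i$. A policy $\pi$ picks $\pi(0)\in\mathcal{I}_0$, $\pi(i)\in\mathcal{I}_i$; value $V(\pi)=\sum_iP_{(\pi(0),i)}\mathbb{E}[R_i\mid\pi(i)]$;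 $\pi^*$ maximizes $V$. Causal parameters: with $\bar q^i_j=\min(q^i_j,1-q^i_j)$ sorted as $\bar q^i_{(1)}\le\dots\le\bar q^i_{(n)}$, $m_i=\max\{j:\bar q^i_{(j)}<1/j\}$; $\mathcal{I}_{m_i}$ is the set of interventions setting a variable with $\bar q^i_{(j)}<1/j$ to its less likely value; $M=\mathrm{diag}(m_1,\dots,m_k)$. Frequency vectors: $f\in\mathbb{R}^N$, $f\ge0$, $\sum f_a=1$; $x^{\circ-1/2}$ is entrywise $x_i^{-1/2}$. Algorithm ALG-CE with budget $T$ (estimates are empirical frequencies/means). Phase 1 ($T/3$ rounds): $T/6$ rounds of $do()$ at state $0$, giving estimates of $q^0_j$, $\widehat m_0$, $\mathcal{I}_{m_0}$, and $\widehat P_{(a,i)}$ for $a\notin\mathcal{I}_{m_0}$ (frequency of reaching $i$ among rounds whose $X^0$-values agree with $a$); then each $a\in\mathcal{I}_{m_0}$ is performed $T/(6|\mathcal{I}_{m_0}|)$ times to get $\widehat P_{(a,i)}$. Phase 2: $\tilde f\in\arg\max_f\min_i(\widehat P^\top f)_i$. Phase 3 ($T/3$ rounds): each $a\in\mathcal{I}_0$ performed $\frac12(\tilde f(a)+\frac1N)\frac T3$ times with $do()$ at the reached state, giving $\widehat m_i$, $\widehat M=\mathrm{diag}(\widehat m_1,\dots,\widehat m_k)$. Phase 4: $\widehat f^*\in\arg\min_f\|\widehat P\widehat M^{1/2}(\widehat P^\top f)^{\circ-1/2}\|_\infty$. Phase 5 ($T/3$ rounds): with $h(a)=\frac13(\widehat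 f^*(a)+\tilde f(a)+\frac1N)$, each $a$ performed $h(a)T/6$ times with $do()$ at the reached state (estimating $\mathcal{I}_{m_i}$ and $\widehat{\mathcal{R}}_{(b,i)}$ for $b\notin\mathcal{I}_{m_i}$ from rounds whose $X^i$-values agree with $b$), then $h(a)T/6$ times with round-robin over $b\in\mathcal{I}_{m_i}$ at the reached state $i$ (estimating $\widehat{\mathcal{R}}_{(b,i)}$ for $b\in\mathcal{I}_{m_i}$). Output $\widehat\pi(i)\in\arg\max_b\widehat{\mathcal{R}}_{(b,i)}$, $\widehat\pi(0)\in\arg\max_a\sum_i\widehat P_{(a,i)}\widehat{\mathcal{R}}_{(\widehat\pi(i),i)}$. Good event $E=E_1\cap\dots\cap E_5$: ($E_1$) for every $a\in\mathcal{I}_0$, the transition estimates formed in each of Phases 1, 3, 5 satisfy $\sum_i|\widehat P_{(a,i)}-P_{(a,i)}|\le p_+/3$; ($E_2$) $\widehat m_0\in[\frac23m_0,2m_0]$; ($E_3$) $\widehat m_i\in[\frac23m_i,2m_i]$ for all $i\in[k]$ (for the estimates in Phases 3 and 5); ($E_4$) for all $a\in\mathcal{I}_0$, the Phase 1 estimates satisfy $\sum_i|\widehat P_{(a,i)}-P_{(a,i)}|\le\eta'$ with $\eta'=\sqrt{\frac{150m_0}{Tp_+}\log\frac{3T}{k}}$; ($E_5$) $|\mathbb{E}[R_i\mid a]-\widehat{\mathcal{R}}_{(a,i)}|\le\widehat\eta_i$ for all $i\in[k]$, $a\in\mathcal{I}_i$, with $\widehat\eta_i=\sqrt{\frac{27\widehat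 m_i}{T(\widehat P^\top\widehat f^* )_i}\log(2TN)}$. Here $\widehat P$ and $\widehat M$ denote the Phase 1 and Phase 3 estimates. *)

theory Defs
  imports Complex_Main
begin

text \<open>Atomic interventions at a state: Obs is do(), Do j b is do(X_j = b).\<close>
datatype interv = Obs | Do nat bool

definition acts :: "nat \<Rightarrow> interv set" where
  "acts n = insert Obs {Do j b | j b. j \<in> {1..n}}"

definition qbar_sorted :: "nat \<Rightarrow> (nat \<Rightarrow> real) \<Rightarrow> real list" where
  "qbar_sorted n q = sort (map (\<lambda>j. min (q j) (1 - q j)) [1..<n+1])"

definition causal_m :: "nat \<Rightarrow> (nat \<Rightarrow> real) \<Rightarrow> nat" where
  "causal_m n q = Max {j \<in> {1..n}. qbar_sorted n q ! (j - 1) < 1 / real j}"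

definition p_plus :: "nat \<Rightarrow> nat \<Rightarrow> (interv \<Rightarrow> nat \<Rightarrow> real) \<Rightarrow> real" where
  "p_plus n k P = Min {P a i | a i. a \<in> acts n \<and> i \<in> {1..k} \<and> P a i > 0}"

definition is_freq :: "nat \<Rightarrow> (interv \<Rightarrow> real) \<Rightarrow> bool" where
  "is_freq n f \<longleftrightarrow> (\<forall>a\<in>acts n. 0 \<le> f a) \<and> (\<Sum>a\<in>acts n. f a) = 1"

definition PTf :: "nat \<Rightarrow> (interv \<Rightarrow> nat \<Rightarrow> real) \<Rightarrow> (interv \<Rightarrow> real) \<Rightarrow> nat \<Rightarrow> real" where
  "PTf n P f i = (\<Sum>a\<in>acts n. P a i * f a)"

text \<open>x^{-1/2}; only ever evaluated where x > 0 or where it is multiplied by 0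
  (convention 0 * infinity = 0).\<close>
definition inv_sqrt :: "real \<Rightarrow> real" where
  "inv_sqrt x = (if x > 0 then 1 / sqrt x else 0)"

definition lam_norm :: "nat \<Rightarrow> nat \<Rightarrow> (interv \<Rightarrow> nat \<Rightarrow> real) \<Rightarrow> (nat \<Rightarrow> nat)
    \<Rightarrow> (interv \<Rightarrow> real) \<Rightarrow> real" where
  "lam_norm n k P mh f =
     Max ((\<lambda>a. \<bar>\<Sum>i=1..k. P a i * sqrt (real (mh i)) * inv_sqrt (PTf n P f i)\<bar>) ` acts n)"

text \<open>Frequency vectors for which the objective is finite (all others give +infinity).\<close>
definition feasible_f :: "nat \<Rightarrow> nat \<Rightarrow> (interv \<Rightarrow> nat \<Rightarrow> real) \<Rightarrow> (interv \<Rightarrow> real) \<Rightarrow> bool" where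
  "feasible_f n k P f \<longleftrightarrow> is_freq n f \<and>
     (\<forall>i\<in>{1..k}. (\<exists>a\<in>acts n. P a i \<noteq> 0) \<longrightarrow> PTf n P f i > 0)"

definition is_policy :: "nat \<Rightarrow> nat \<Rightarrow> interv \<Rightarrow> (nat \<Rightarrow> interv) \<Rightarrow> bool" where
  "is_policy n k a0 pol \<longleftrightarrow> a0 \<in> acts n \<and> (\<forall>i\<in>{1..k}. pol i \<in> acts n)"

definition pol_value :: "nat \<Rightarrow> (interv \<Rightarrow> nat \<Rightarrow> real) \<Rightarrow> (nat \<Rightarrow> interv \<Rightarrow> real)
    \<Rightarrow> interv \<Rightarrow> (nat \<Rightarrow> interv) \<Rightarrow> real" where
  "pol_value k P r a0 pol = (\<Sum>i=1..k. P a0 i * r i (pol i))"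

definition is_optimal :: "nat \<Rightarrow> nat \<Rightarrow> (interv \<Rightarrow> nat \<Rightarrow> real) \<Rightarrow> (nat \<Rightarrow> interv \<Rightarrow> real)
    \<Rightarrow> interv \<Rightarrow> (nat \<Rightarrow> interv) \<Rightarrow> bool" where
  "is_optimal n k P r a0 pol \<longleftrightarrow> is_policy n k a0 pol \<and>
     (\<forall>b0 pol'. is_policy n k b0 pol' \<longrightarrow> pol_value k P r b0 pol' \<le> pol_value k P r a0 pol)"

end

theory Submission
  imports Defs
begin

(* Write V-hat(pi) for the plug-in value sum_i P1_(pi(0),i) Rh_(pi(i),i). Then
   V(pi) - V-hat(pi) = sum_i (P - P1)_(pi(0),i) R_i(pi(i)) + sum_i P1_(pi(0),i) (R - Rh)_(pi(i),i).
   Since rewards lie in [0,1], the first sum is at most the l1 error of row pi(0), i.e. eta' by E4.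
   By E5 the second is at most sum_i P1_(pi(0),i) eta-hat_i = sqrt(27 log(2TN)/T) times the
   pi(0)-th entry of P1 M^(1/2) (P1^T f)^(-1/2), hence at most sqrt(27 log(2TN) lambda-hat / T).
   Both radii are O(sqrt(max(lambda-hat, m0/p+) log(NT)/T)). The argument works for every policy
   and every feasible f. *)

lemma finite_acts: "finite (acts n)"
proof -
  have "{Do j b | j b. j \<in> {1..n}} = (\<lambda>(j, b). Do j b) ` ({1..n} \<times> UNIV)" by auto
  then show ?thesis unfolding acts_def by simp
qed

lemma p_plus_pos:
  assumes "a \<in> acts n" "i \<in> {1..k}" "P a i > 0"
  shows "p_plus n k P > 0"
proof -
  let ?S = "{P a i | a i. a \<in> acts n \<and> i \<in> {1..k} \<and> P a i > 0}"
  have "?S \<subseteq> (\<lambda>(a, i). P a i) ` (acts n \<times> {1..k})" by auto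
  then have "finite ?S" by (rule finite_subset) (simp add: finite_acts)
  moreover have "?S \<noteq> {}" using assms by blast
  ultimately show ?thesis unfolding p_plus_def by (subst Min_gr_iff) auto
qed

lemma lam_norm_ge_row:
  assumes "a \<in> acts n"
  shows "\<bar>\<Sum>i=1..k. P a i * sqrt (real (mh i)) * inv_sqrt (PTf n P f i)\<bar> \<le> lam_norm n k P mh f"
  unfolding lam_norm_def using assms finite_acts by (intro Max_ge) auto

lemma lam_norm_nonneg: "0 \<le> lam_norm n k P mh f"
proof -
  have "Obs \<in> acts n" by (simp add: acts_def)
  from lam_norm_ge_row[OF this] show ?thesis by (rule order_trans[OF abs_ge_zero])
qed

lemma pol_value_diff:
  "pol_value k P r a pol - pol_value k P' r' a pol
     = (\<Sum>i=1..k. (P a i - P' a i) * r i (pol i)) + (\<Sum>i=1..k. P' a i * (r i (pol i) - r' i (pol i)))"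
  unfolding pol_value_def sum.distrib[symmetric] sum_subtractf[symmetric]
  by (rule sum.cong) (simp_all add: algebra_simps)

lemma sum_diff_mult_le_l1_dist:
  fixes p p' r :: "'a \<Rightarrow> real"
  assumes "\<And>i. i \<in> I \<Longrightarrow> 0 \<le> r i \<and> r i \<le> 1"
  shows "(\<Sum>i\<in>I. (p i - p' i) * r i) \<le> (\<Sum>i\<in>I. \<bar>p' i - p i\<bar>)"
proof (rule sum_mono)
  fix i assume "i \<in> I"
  then have "(p i - p' i) * r i \<le> \<bar>p i - p' i\<bar> * r i" "\<bar>p i - p' i\<bar> * r i \<le> \<bar>p i - p' i\<bar>"
    using assms by (auto intro: mult_right_mono simp: mult_left_le)
  then show "(p i - p' i) * r i \<le> \<bar>p' i - p i\<bar>" by simp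
qed

lemma weighted_error_le_lam_norm:
  assumes feas: "feasible_f n k P f" and a: "a \<in> acts n"
    and P_nonneg: "\<forall>i\<in>{1..k}. 0 \<le> P a i" and c: "0 \<le> c"
    and err: "\<forall>i\<in>{1..k}. PTf n P f i > 0 \<longrightarrow> \<bar>e i\<bar> \<le> sqrt (c * real (mh i) / PTf n P f i)"
  shows "(\<Sum>i=1..k. P a i * e i) \<le> sqrt c * lam_norm n k P mh f"
proof -
  define g where "g i = P a i * sqrt (real (mh i)) * inv_sqrt (PTf n P f i)" for i
  have term_le: "P a i * e i \<le> sqrt c * g i" if i: "i \<in> {1..k}" for i
  proof (cases "PTf n P f i > 0")
    case True
    have "P a i * e i \<le> P a i * sqrt (c * real (mh i) / PTf n P f i)"
      using P_nonneg err True i by (intro mult_left_mono) auto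
    also have "\<dots> = sqrt c * g i"
      using True by (simp add: g_def inv_sqrt_def real_sqrt_mult real_sqrt_divide)
    finally show ?thesis .
  next
    case False
    \<comment> \<open>feasibility makes column i of P vanish, so the infinite radius there does no harm\<close>
    then have "P a i = 0" using feas a i unfolding feasible_f_def by auto
    then show ?thesis using False by (simp add: g_def inv_sqrt_def)
  qed
  have "(\<Sum>i=1..k. P a i * e i) \<le> sqrt c * (\<Sum>i=1..k. g i)"
    unfolding sum_distrib_left using term_le by (rule sum_mono)
  also have "\<dots> \<le> sqrt c * lam_norm n k P mh f"
    using lam_norm_ge_row[OF a, where k = k and P = P and mh = mh and f = f] c
    by (intro mult_left_mono) (auto simp: g_def)
  finally show ?thesis .
qed

lemma sqrt_mult_le_of_le_square:
  fixes c d x :: real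
  assumes "0 \<le> x" "c \<le> d\<^sup>2" "0 \<le> d"
  shows "sqrt (c * x) \<le> d * sqrt x"
proof -
  have "sqrt (c * x) \<le> sqrt (d\<^sup>2 * x)" using assms by (intro real_sqrt_le_mono mult_right_mono)
  also have "\<dots> = d * sqrt x" using assms by (simp add: real_sqrt_mult)
  finally show ?thesis .
qed

lemma ln_two_mult_le:
  fixes x :: real
  assumes "2 \<le> x"
  shows "ln (2 * x) \<le> 2 * ln x"
proof -
  have "2 * x \<le> x ^ 2" using assms by (simp add: power2_eq_square mult_right_mono)
  then have "ln (2 * x) \<le> ln (x ^ 2)" using assms by simp
  also have "\<dots> = 2 * ln x" using assms by (simp add: ln_realpow)
  finally show ?thesis .
qed

lemma transition_radius_le_rate:
  fixes T k N m pp lam :: real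
  assumes pp: "0 < pp" and T: "1 \<le> T" and k: "1 \<le> k" and N: "3 \<le> N" and m: "0 \<le> m"
  shows "sqrt (150 * m / (T * pp) * ln (3 * T / k))
           \<le> 13 * sqrt (max lam (m / pp) * ln (N * T) / T)"
proof -
  define X where "X = max lam (m / pp) * ln (N * T) / T"
  have NT: "3 \<le> N * T" using mult_mono[OF N T] N by simp
  then have lnNT: "0 \<le> ln (N * T)" by simp
  have X: "0 \<le> X" unfolding X_def using pp m lnNT T by (auto simp: le_max_iff_disj)
  have "150 * m / (T * pp) * ln (3 * T / k) \<le> 150 * X"
  proof (cases "0 \<le> ln (3 * T / k)")
    case True
    have "3 * T / k \<le> 3 * T" using k T by (simp add: divide_le_eq)
    also have "\<dots> \<le> N * T" using N T by simp
    finally have "ln (3 * T / k) \<le> ln (N * T)" using T k NT by (subst ln_le_cancel_iff) auto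
    moreover have "m / pp \<le> max lam (m / pp)" by simp
    ultimately have "m / pp * ln (3 * T / k) \<le> max lam (m / pp) * ln (N * T)"
      using True pp m by (intro mult_mono) (auto simp: le_max_iff_disj)
    then have "150 * (m / pp * ln (3 * T / k)) / T \<le> 150 * (max lam (m / pp) * ln (N * T)) / T"
      using T by (intro divide_right_mono) auto
    then show ?thesis unfolding X_def by (simp add: field_simps)
  next
    case False
    have "150 * m / (T * pp) * ln (3 * T / k) \<le> 0"
      using False pp m T by (intro mult_nonneg_nonpos) auto
    then show ?thesis using X by linarith
  qed
  then have "sqrt (150 * m / (T * pp) * ln (3 * T / k)) \<le> sqrt (150 * X)" by simp
  also have "\<dots> \<le> 13 * sqrt X" using X by (intro sqrt_mult_le_of_le_square) auto
  finally show ?thesis unfolding X_def .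
qed

lemma reward_radius_le_rate:
  fixes T N l mu :: real
  assumes T: "1 \<le> T" and N: "3 \<le> N" and l: "0 \<le> l"
  shows "sqrt (27 * ln (2 * T * N) / T) * l \<le> 8 * sqrt (max (l\<^sup>2) mu * ln (N * T) / T)"
proof -
  define X where "X = max (l\<^sup>2) mu * ln (N * T) / T"
  have NT: "2 \<le> N * T" using mult_mono[OF N T] N by simp
  then have lnNT: "0 \<le> ln (N * T)" by simp
  have X: "0 \<le> X" unfolding X_def using lnNT T by (auto simp: le_max_iff_disj)
  have "ln (2 * T * N) \<le> 2 * ln (N * T)"
    using ln_two_mult_le[OF NT] by (simp add: mult_ac)
  moreover have "0 \<le> ln (2 * T * N)" using NT by (simp add: mult_ac)
  ultimately have "27 * ln (2 * T * N) * l\<^sup>2 \<le> 27 * (2 * ln (N * T)) * max (l\<^sup>2) mu"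
    using lnNT by (intro mult_mono) auto
  then have radicand_le: "27 * ln (2 * T * N) / T * l\<^sup>2 \<le> 54 * X"
    unfolding X_def using T by (simp add: field_simps)
  have "sqrt (27 * ln (2 * T * N) / T) * l = sqrt (27 * ln (2 * T * N) / T * l\<^sup>2)"
    using l by (simp only: real_sqrt_mult real_sqrt_abs abs_of_nonneg)
  also have "\<dots> \<le> sqrt (54 * X)" using radicand_le by simp
  also have "\<dots> \<le> 8 * sqrt X" using X by (intro sqrt_mult_le_of_le_square) auto
  finally show ?thesis unfolding X_def .
qed

lemma policy_value_le_estimate:
  fixes n k T m0 :: nat
  assumes n: "1 \<le> n" and k: "1 \<le> k" and T: "0 < T"
    and P_stoch: "\<forall>a\<in>acts n. (\<forall>i\<in>{1..k}. 0 \<le> P a i) \<and> (\<Sum>i=1..k. P a i) = 1"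
    and R_range: "\<forall>i\<in>{1..k}. \<forall>b\<in>acts n. 0 \<le> R i b \<and> R i b \<le> 1"
    and P1_nonneg: "\<forall>a\<in>acts n. \<forall>i\<in>{1..k}. 0 \<le> P1 a i"
    and feas: "feasible_f n k P1 f"
    and policy: "is_policy n k a0 pol"
    and E4: "\<forall>a\<in>acts n. (\<Sum>i=1..k. \<bar>P1 a i - P a i\<bar>)
          \<le> sqrt (150 * real m0 / (real T * p_plus n k P) * ln (3 * real T / real k))"
    and E5: "\<forall>i\<in>{1..k}. PTf n P1 f i > 0 \<longrightarrow> (\<forall>b\<in>acts n.
          \<bar>R i b - Rh b i\<bar> \<le> sqrt (27 * real (mh i) / (real T * PTf n P1 f i)
                                     * ln (2 * real T * real (2 * n + 1))))"
  shows "pol_value k P R a0 pol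
        \<le> pol_value k P1 (\<lambda>i b. Rh b i) a0 pol
           + 21 * sqrt (max ((lam_norm n k P1 mh f)\<^sup>2) (real m0 / p_plus n k P)
                        * ln (real (2 * n + 1) * real T) / real T)"
proof -
  define X where "X = max ((lam_norm n k P1 mh f)\<^sup>2) (real m0 / p_plus n k P)
                        * ln (real (2 * n + 1) * real T) / real T"
  define L where "L = ln (2 * real T * real (2 * n + 1))"
  have a0: "a0 \<in> acts n" and pol: "\<forall>i\<in>{1..k}. pol i \<in> acts n"
    using policy unfolding is_policy_def by auto
  have N: "3 \<le> real (2 * n + 1)" and T1: "1 \<le> real T" using n T by auto
  have "\<exists>i\<in>{1..k}. P a0 i > 0"
  proof (rule ccontr)
    assume "\<not> ?thesis"
    then have "(\<Sum>i=1..k. P a0 i) \<le> 0" by (intro sum_nonpos) (auto simp: not_less)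
    then show False using P_stoch a0 by simp
  qed
  then have pp: "p_plus n k P > 0" using a0 p_plus_pos by blast
  have "(\<Sum>i=1..k. (P a0 i - P1 a0 i) * R i (pol i)) \<le> (\<Sum>i=1..k. \<bar>P1 a0 i - P a0 i\<bar>)"
    using R_range pol by (intro sum_diff_mult_le_l1_dist) auto
  also have "\<dots> \<le> sqrt (150 * real m0 / (real T * p_plus n k P) * ln (3 * real T / real k))"
    using E4 a0 by blast
  also have "\<dots> \<le> 13 * sqrt X"
    unfolding X_def using k by (intro transition_radius_le_rate[OF pp T1 _ N]) auto
  finally have transition_error: "(\<Sum>i=1..k. (P a0 i - P1 a0 i) * R i (pol i)) \<le> 13 * sqrt X" .
  have radius_eq: "27 * real (mh i) / (real T * p) * L = 27 * L / real T * real (mh i) / p" for i p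
    by (simp add: field_simps)
  have "1 \<le> real T * real (2 * n + 1)" using mult_mono[OF T1 N] by simp
  then have "L \<ge> 0" unfolding L_def by (simp add: mult.assoc)
  moreover have "\<forall>i\<in>{1..k}. 0 < PTf n P1 f i \<longrightarrow>
      \<bar>R i (pol i) - Rh (pol i) i\<bar> \<le> sqrt (27 * L / real T * real (mh i) / PTf n P1 f i)"
    using E5[folded L_def, unfolded radius_eq] pol by blast
  ultimately have "(\<Sum>i=1..k. P1 a0 i * (R i (pol i) - Rh (pol i) i))
      \<le> sqrt (27 * L / real T) * lam_norm n k P1 mh f"
    using P1_nonneg a0 by (intro weighted_error_le_lam_norm[OF feas a0]) auto
  also have "\<dots> \<le> 8 * sqrt X"
    unfolding L_def X_def by (rule reward_radius_le_rate[OF T1 N lam_norm_nonneg])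
  finally have reward_error: "(\<Sum>i=1..k. P1 a0 i * (R i (pol i) - Rh (pol i) i)) \<le> 8 * sqrt X" .
  show ?thesis
    using pol_value_diff[of k P R a0 pol P1 "\<lambda>i b. Rh b i"] transition_error reward_error
    unfolding X_def by linarith
qed

theorem lemma1:
  shows "\<exists>C>0. \<forall>(n::nat) (k::nat) (T::nat) (q::nat \<Rightarrow> nat \<Rightarrow> real)
      (P::interv \<Rightarrow> nat \<Rightarrow> real) (R::nat \<Rightarrow> interv \<Rightarrow> real)
      (P1::interv \<Rightarrow> nat \<Rightarrow> real) (P3::interv \<Rightarrow> nat \<Rightarrow> real) (P5::interv \<Rightarrow> nat \<Rightarrow> real)
      (mh0::nat) (mh3::nat \<Rightarrow> nat) (mh5::nat \<Rightarrow> nat) (Rh::interv \<Rightarrow> nat \<Rightarrow> real)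
      (fstar::interv \<Rightarrow> real) (a0::interv) (pol::nat \<Rightarrow> interv).
    let N = 2 * n + 1; m = (\<lambda>i. causal_m n (q i)); pp = p_plus n k P;
        lam = (lam_norm n k P1 mh3 fstar)\<^sup>2 in
    ( n \<ge> 1 \<and> k \<ge> 1 \<and> T > 0
    \<and> (\<forall>i\<in>{0..k}. \<forall>j\<in>{1..n}. 0 \<le> q i j \<and> q i j \<le> 1)
    \<and> (\<forall>a\<in>acts n. (\<forall>i\<in>{1..k}. 0 \<le> P a i) \<and> (\<Sum>i=1..k. P a i) = 1)
    \<and> (\<forall>i\<in>{1..k}. \<forall>b\<in>acts n. 0 \<le> R i b \<and> R i b \<le> 1)
    \<and> (\<forall>Pe\<in>{P1, P3, P5}. \<forall>a\<in>acts n. \<forall>i\<in>{1..k}. 0 \<le> Pe a i \<and> Pe a i \<le> 1)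
    \<and> (\<forall>i\<in>{1..k}. \<forall>b\<in>acts n. 0 \<le> Rh b i \<and> Rh b i \<le> 1)
    \<and> feasible_f n k P1 fstar
    \<and> (\<forall>f. feasible_f n k P1 f \<longrightarrow> lam_norm n k P1 mh3 fstar \<le> lam_norm n k P1 mh3 f)
    \<and> is_optimal n k P R a0 pol
    \<comment> \<open>E1\<close>
    \<and> (\<forall>Pe\<in>{P1, P3, P5}. \<forall>a\<in>acts n. (\<Sum>i=1..k. \<bar>Pe a i - P a i\<bar>) \<le> pp / 3)
    \<comment> \<open>E2\<close>
    \<and> 2/3 * real (m 0) \<le> real mh0 \<and> real mh0 \<le> 2 * real (m 0)
    \<comment> \<open>E3\<close>
    \<and> (\<forall>mh\<in>{mh3, mh5}. \<forall>i\<in>{1..k}. 2/3 * real (m i) \<le> real (mh i) \<and> real (mh i) \<le> 2 * real (m i))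
    \<comment> \<open>E4\<close>
    \<and> (\<forall>a\<in>acts n. (\<Sum>i=1..k. \<bar>P1 a i - P a i\<bar>)
          \<le> sqrt (150 * real (m 0) / (real T * pp) * ln (3 * real T / real k)))
    \<comment> \<open>E5 (vacuous where (P1^T fstar)_i = 0, i.e. where the radius is infinite)\<close>
    \<and> (\<forall>i\<in>{1..k}. PTf n P1 fstar i > 0 \<longrightarrow> (\<forall>b\<in>acts n.
          \<bar>R i b - Rh b i\<bar> \<le> sqrt (27 * real (mh3 i) / (real T * PTf n P1 fstar i)
                                     * ln (2 * real T * real N))))
    \<longrightarrow> pol_value k P R a0 pol
        \<le> pol_value k P1 (\<lambda>i b. Rh b i) a0 pol
           + C * sqrt (max lam (real (m 0) / pp) * ln (real N * real T) / real T))"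
  unfolding Let_def is_optimal_def
  by (intro exI[of _ 21] conjI allI impI)
     (simp, elim conjE, (rule policy_value_le_estimate; (assumption | blast)))

end
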